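(* For $n\ge1$, $\left|\Pi_n\wr C_2(1^11^2,1^12^2)\right|=(n+1)B(n)$, where $B(n)$ is the $n$th Bell number.
   Context: For $n\ge0$ let $[n]=\{1,\dots,n\}$. A $2$-colored set partition of $[n]$ is a set partition of $[n]$ together with an assignment of a color from $\{1,2\}$ to each element; $\Pi_n\wr C_2$ is the set of these. For a set $S$ of patterns, $\Pi_n\wr C_2(S)$ is the set of such colored partitions avoiding every pattern in $S$ in the pattern sense. For the patterns used here: $\sigma$ contains $1^11^2$ iff there are $i<j$ in the same block with $i$ colored $1$ and $j$ colored $2$; $\sigma$ contains $1^12^2$ iff there are $i<j$ in different blocks with $i$ colored $1$ and $j$ colored $2$. $B(n)$ is the number of set partitions of $[n]$. *)

theory Defs
  imports "HOL-Library.Disjoint_Sets" "HOL-Library.FuncSet"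
begin

definition set_partitions :: "nat \<Rightarrow> nat set set set" where
  "set_partitions n = {P. partition_on {1..n} P}"

definition Bell :: "nat \<Rightarrow> nat" where
  "Bell n = card (set_partitions n)"

definition colored_partitions :: "nat \<Rightarrow> (nat set set \<times> (nat \<Rightarrow> nat)) set" where
  "colored_partitions n = {(P, c). partition_on {1..n} P \<and> c \<in> {1..n} \<rightarrow>\<^sub>E {1, 2}}"

definition contains_11_12 :: "nat set set \<times> (nat \<Rightarrow> nat) \<Rightarrow> bool" where
  "contains_11_12 \<sigma> = (case \<sigma> of (P, c) \<Rightarrow>
     \<exists>i j B. i < j \<and> B \<in> P \<and> i \<in> B \<and> j \<in> B \<and> c i = 1 \<and> c j = 2)"

definition contains_11_22 :: "nat set set \<times> (nat \<Rightarrow> nat) \<Rightarrow> bool" where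
  "contains_11_22 \<sigma> = (case \<sigma> of (P, c) \<Rightarrow>
     \<exists>i j B B'. i < j \<and> B \<in> P \<and> B' \<in> P \<and> B \<noteq> B' \<and> i \<in> B \<and> j \<in> B'
        \<and> c i = 1 \<and> c j = 2)"

end

theory Submission
  imports Defs
begin

text \<open>Every pair \<open>i < j\<close> of \<open>[n]\<close> lies either in one block or in two different blocks, so
  avoiding both patterns only says that no colour 1 precedes a colour 2; the partition is
  unconstrained. Such colourings are 2 on an initial segment \<open>{1..k}\<close> and 1 afterwards,
  giving \<open>n + 1\<close> choices of \<open>k\<close> for each of the \<open>B(n)\<close> partitions.\<close>

definition colourings_avoiding_12 :: "nat \<Rightarrow> (nat \<Rightarrow> nat) set" where
  "colourings_avoiding_12 n =
     {c \<in> {1..n} \<rightarrow>\<^sub>E {1, 2}. \<forall>i\<in>{1..n}. \<forall>j\<in>{1..n}. i < j \<longrightarrow> \<not> (c i = 1 \<and> c j = 2)}"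

definition initial_segment_colouring :: "nat \<Rightarrow> nat \<Rightarrow> nat \<Rightarrow> nat" where
  "initial_segment_colouring n k = restrict (\<lambda>i. if i \<le> k then 2 else 1) {1..n}"

lemma contains_11_12_or_11_22_iff:
  assumes "partition_on {1..n} P"
  shows "contains_11_12 (P, c) \<or> contains_11_22 (P, c) \<longleftrightarrow>
         (\<exists>i\<in>{1..n}. \<exists>j\<in>{1..n}. i < j \<and> c i = 1 \<and> c j = 2)"
proof
  have "\<Union>P = {1..n}" using assms by (simp add: partition_on_def)
  then show "contains_11_12 (P, c) \<or> contains_11_22 (P, c) \<Longrightarrow>
             \<exists>i\<in>{1..n}. \<exists>j\<in>{1..n}. i < j \<and> c i = 1 \<and> c j = 2"
    unfolding contains_11_12_def contains_11_22_def by blast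
next
  assume "\<exists>i\<in>{1..n}. \<exists>j\<in>{1..n}. i < j \<and> c i = 1 \<and> c j = 2"
  then obtain i j where ij: "i \<in> {1..n}" "j \<in> {1..n}" "i < j" "c i = 1" "c j = 2"
    by blast
  obtain B B' where "B \<in> P" "i \<in> B" "B' \<in> P" "j \<in> B'"
    using ij(1,2) assms by (metis partition_on_def UnionE)
  then show "contains_11_12 (P, c) \<or> contains_11_22 (P, c)"
    using ij(3-5) unfolding contains_11_12_def contains_11_22_def by (cases "B = B'") blast+
qed

lemma pattern_avoiders_eq_product:
  "{\<sigma> \<in> colored_partitions n. \<not> contains_11_12 \<sigma> \<and> \<not> contains_11_22 \<sigma>}
     = set_partitions n \<times> colourings_avoiding_12 n" (is "?A = ?B")
proof (rule set_eqI)
  fix \<sigma> :: "nat set set \<times> (nat \<Rightarrow> nat)"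
  obtain P c where \<sigma>: "\<sigma> = (P, c)" by fastforce
  show "\<sigma> \<in> ?A \<longleftrightarrow> \<sigma> \<in> ?B"
  proof (cases "partition_on {1..n} P")
    case True
    have "\<not> contains_11_12 (P, c) \<and> \<not> contains_11_22 (P, c) \<longleftrightarrow>
          (\<forall>i\<in>{1..n}. \<forall>j\<in>{1..n}. i < j \<longrightarrow> \<not> (c i = 1 \<and> c j = 2))"
      using contains_11_12_or_11_22_iff[OF True, of c] by blast
    with True show ?thesis
      unfolding \<sigma> colored_partitions_def set_partitions_def colourings_avoiding_12_def
      by blast
  qed (simp add: \<sigma> colored_partitions_def set_partitions_def)
qed

lemma colourings_avoiding_12_twos_initial_segment:
  assumes c: "c \<in> colourings_avoiding_12 n"
  obtains k where "k \<le> n" and "{i \<in> {1..n}. c i = 2} = {1..k}"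
proof -
  define T where "T = {i \<in> {1..n}. c i = 2}"
  define k where "k = Max (insert 0 T)"
  have fin: "finite (insert 0 T)" by (simp add: T_def)
  have T_le_k: "i \<le> k" if "i \<in> T" for i
    unfolding k_def using fin that by (intro Max_ge) auto
  have "k \<le> n" unfolding k_def using fin by (subst Max_le_iff) (auto simp: T_def)
  have k_in: "k = 0 \<or> k \<in> T" using Max_in[OF fin] by (auto simp: k_def)
  have "{1..k} \<subseteq> T"
  proof
    fix i assume i: "i \<in> {1..k}"
    then have "k \<in> T" using k_in by auto
    then have k: "k \<in> {1..n}" "c k = 2" by (auto simp: T_def)
    show "i \<in> T"
    proof (cases "i = k")
      case False
      with i k have "i \<in> {1..n}" "i < k" by auto
      with k c have "c i \<noteq> 1" "c i \<in> {1, 2}"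
        unfolding colourings_avoiding_12_def by blast+
      with \<open>i \<in> {1..n}\<close> show ?thesis by (auto simp: T_def)
    qed (use \<open>k \<in> T\<close> in simp)
  qed
  moreover have "T \<subseteq> {1..k}" using T_le_k by (auto simp: T_def)
  ultimately show thesis using that \<open>k \<le> n\<close> by (auto simp: T_def)
qed

lemma colourings_avoiding_12_eq_image:
  "colourings_avoiding_12 n = initial_segment_colouring n ` {0..n}"
proof safe
  fix c assume c: "c \<in> colourings_avoiding_12 n"
  then obtain k where "k \<le> n" and twos: "{i \<in> {1..n}. c i = 2} = {1..k}"
    by (rule colourings_avoiding_12_twos_initial_segment)
  have "c = initial_segment_colouring n k"
  proof
    fix i
    show "c i = initial_segment_colouring n k i"
    proof (cases "i \<in> {1..n}")
      case True
      then have "c i = 2 \<longleftrightarrow> i \<le> k" using twos by (auto simp: set_eq_iff)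
      moreover have "c i \<in> {1, 2}" using c True by (auto simp: colourings_avoiding_12_def)
      ultimately show ?thesis using True by (auto simp: initial_segment_colouring_def)
    next
      case False
      with c have "c i = undefined" unfolding colourings_avoiding_12_def by (blast intro: PiE_arb)
      with False show ?thesis by (auto simp: initial_segment_colouring_def)
    qed
  qed
  with \<open>k \<le> n\<close> show "c \<in> initial_segment_colouring n ` {0..n}" by auto
next
  fix k
  show "initial_segment_colouring n k \<in> colourings_avoiding_12 n"
    unfolding colourings_avoiding_12_def initial_segment_colouring_def by auto
qed

lemma inj_on_initial_segment_colouring: "inj_on (initial_segment_colouring n) {0..n}"
proof (rule inj_onI, rule ccontr)
  fix k k' assume k: "k \<in> {0..n}" "k' \<in> {0..n}" and "k \<noteq> k'"
    and eq: "initial_segment_colouring n k = initial_segment_colouring n k'"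
  \<comment> \<open>the two colourings differ at \<open>max k k'\<close>\<close>
  define m where "m = max k k'"
  have "m \<in> {1..n}" using k \<open>k \<noteq> k'\<close> by (auto simp: m_def max_def)
  moreover have "(m \<le> k) \<noteq> (m \<le> k')" using \<open>k \<noteq> k'\<close> by (auto simp: m_def)
  moreover have "initial_segment_colouring n k m = initial_segment_colouring n k' m"
    using eq by simp
  ultimately show False by (auto simp: initial_segment_colouring_def split: if_splits)
qed

lemma card_colourings_avoiding_12: "card (colourings_avoiding_12 n) = n + 1"
  by (simp add: colourings_avoiding_12_eq_image card_image[OF inj_on_initial_segment_colouring])

theorem mainTheorem8:
  fixes n :: nat
  assumes "n \<ge> 1"
  shows "card {\<sigma> \<in> colored_partitions n. \<not> contains_11_12 \<sigma> \<and> \<not> contains_11_22 \<sigma>}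
           = (n + 1) * Bell n"
  unfolding pattern_avoiders_eq_product card_cartesian_product card_colourings_avoiding_12
    Bell_def by simp

end
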